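(* Normalize $\operatorname{var}(X)=1$ and $\operatorname{var}(W_1)=I_{d_1}$, suppose $\operatorname{var}(Y,X,W_1)$ is positive definite, $\sigma_{W_1,Y}\ne\sigma_{X,Y}\sigma_{W_1,X}$, and $\|c\|<1$. For any $r_X\in\mathbb R^{d_1}$ with $r_X'c\ne-1$ and $0<z_X(r_X,c)^2<k_0$, $$\bigcup_{r_Y\in\mathbb R^{d_1}}\mathcal B(r_X,r_Y,c)=\big(\beta_{\text{med}}-\sqrt{\text{devsq}(z_X(r_X,c))},\ \beta_{\text{med}}+\sqrt{\text{devsq}(z_X(r_X,c))}\big)\setminus\mathcal B^0,$$ where $\mathcal B^0$ is a set containing at most one point.
   Context: For random vectors $A,B$ with $\operatorname{var}(B)$ invertible, $A^{\perp B}=A-\operatorname{cov}(A,B)\operatorname{var}(B)^{-1}B$. $\sigma_{A,B}=\operatorname{cov}(A,B)$. $\beta_{\text{med}}$ is the coefficient on $X$ in the linear projection of $Y$ on $(1,X,W_1)$. $k_0=\operatorname{var}(X^{\perp W_1})$, $k_1=\operatorname{cov}(Y^{\perp W_1},X^{\perp W_1})$; $\text{devsq}(z)=\frac{\operatorname{var}(Y^{\perp X,W_1})}{k_0}\frac{z^2}{k_0-z^2}$; $z_X(r_X,c)=\frac{r_X'\sigma_{W_1,X}\sqrt{1-\|c\|^2}}{1+r_X'c}$. For $r_X,r_Y,c\in\mathbb R^{d_1}$, $\mathcal B(r_X,r_Y,c)$ is the set of $b\in\mathbb R$ such that for some $(p_1,g_1)\in\mathbb R^{d_1}\times\mathbb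 R^{d_1}$ (with $\Sigma_{\text{obs}}=\operatorname{var}(W_1)$): $\operatorname{cov}(Y,X)=b\operatorname{var}(X)+g_1'(\Sigma_{\text{obs}}+cr_X'+r_Yc'+r_Yr_X')p_1$; $\operatorname{cov}(Y,W_1)=b\operatorname{cov}(X,W_1)+g_1'(\Sigma_{\text{obs}}+r_Yc')$; $\operatorname{cov}(X,W_1)=p_1'(\Sigma_{\text{obs}}+r_Xc')$; $\operatorname{var}(Y)>b^2\operatorname{var}(X)+g_1'(\Sigma_{\text{obs}}+r_Yr_Y'+2r_Yc')g_1+2bg_1'(\Sigma_{\text{obs}}+cr_X'+r_Yc'+r_Yr_X')p_1$; $\operatorname{var}(X)>p_1'(\Sigma_{\text{obs}}+2r_Xc'+r_Xr_X')p_1$; $1>c'\Sigma_{\text{obs}}^{-1}c$. *)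

theory Defs
  imports "HOL-Analysis.Analysis"
begin

text \<open>Second-moment structure of the random vector (Y, X, W1), with Y, X scalar and
  W1 in R^d1 (d1 = CARD('n)). All objects in the statement depend on the
  distribution only through these moments.\<close>
record 'n moments =
  varY  :: real
  varX  :: real
  covYX :: real
  covWX :: "real^'n"
  covWY :: "real^'n"
  varW  :: "real^'n^'n"

definition var_pos_def :: "'n::finite moments \<Rightarrow> bool" where
  "var_pos_def m \<longleftrightarrow> transpose (varW m) = varW m \<and>
     (\<forall>(a::real) (b::real) (w::real^'n). (a, b, w) \<noteq> (0, 0, 0) \<longrightarrow>
        a\<^sup>2 * varY m + b\<^sup>2 * varX m + w \<bullet> (varW m *v w)
        + 2 * a * b * covYX m + 2 * a * (w \<bullet> covWY m) + 2 * b * (w \<bullet> covWX m) > 0)"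

text \<open>Coefficients (b, g) of the linear projection of Y on (1, X, W1), characterised by
  the normal equations cov(Y - bX - g'W1, X) = 0 and cov(Y - bX - g'W1, W1) = 0.\<close>
definition proj_coefs :: "'n::finite moments \<Rightarrow> real \<times> (real^'n)" where
  "proj_coefs m = (THE bg. case bg of (b, g) \<Rightarrow>
      covYX m = b * varX m + g \<bullet> covWX m \<and> covWY m = b *\<^sub>R covWX m + varW m *v g)"

definition beta_med :: "'n::finite moments \<Rightarrow> real" where
  "beta_med m = fst (proj_coefs m)"

text \<open>var(Y^{\<perp> X,W1}) = var(Y - b X - g'W1) = var Y - b cov(X,Y) - g' cov(W1,Y).\<close>
definition var_Y_perp_XW :: "'n::finite moments \<Rightarrow> real" where
  "var_Y_perp_XW m = (case proj_coefs m of (b, g) \<Rightarrow> varY m - b * covYX m - g \<bullet> covWY m)"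

definition k0 :: "'n::finite moments \<Rightarrow> real" where
  "k0 m = varX m - covWX m \<bullet> (matrix_inv (varW m) *v covWX m)"

definition k1 :: "'n::finite moments \<Rightarrow> real" where
  "k1 m = covYX m - covWY m \<bullet> (matrix_inv (varW m) *v covWX m)"

definition devsq :: "'n::finite moments \<Rightarrow> real \<Rightarrow> real" where
  "devsq m z = var_Y_perp_XW m / k0 m * (z\<^sup>2 / (k0 m - z\<^sup>2))"

definition z_X :: "'n::finite moments \<Rightarrow> real^'n \<Rightarrow> real^'n \<Rightarrow> real" where
  "z_X m rX c = (rX \<bullet> covWX m) * sqrt (1 - (norm c)\<^sup>2) / (1 + rX \<bullet> c)"

definition outer :: "real^'n \<Rightarrow> real^'n \<Rightarrow> real^'n^'n" where
  "outer u v = (\<chi> i j. u $ i * v $ j)"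

definition BSet :: "'n::finite moments \<Rightarrow> real^'n \<Rightarrow> real^'n \<Rightarrow> real^'n \<Rightarrow> real set" where
  "BSet m rX rY c = {b. \<exists>p1 g1 :: real^'n.
     let S = varW m in
     covYX m = b * varX m + g1 \<bullet> ((S + outer c rX + outer rY c + outer rY rX) *v p1) \<and>
     covWY m = b *\<^sub>R covWX m + g1 v* (S + outer rY c) \<and>
     covWX m = p1 v* (S + outer rX c) \<and>
     varY m > b\<^sup>2 * varX m + g1 \<bullet> ((S + outer rY rY + 2 *\<^sub>R outer rY c) *v g1)
              + 2 * b * (g1 \<bullet> ((S + outer c rX + outer rY c + outer rY rX) *v p1)) \<and>
     varX m > p1 \<bullet> ((S + 2 *\<^sub>R outer rX c + outer rX rX) *v p1) \<and>
     1 > c \<bullet> (matrix_inv S *v c)}"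

end

theory Submission
  imports Defs
begin

text \<open>Once var(W1) = I, the equation for cov(X,W1) forces rX'p1 = kappa and thereby determines p1,
  and the equation for cov(Y,W1) determines g1 from b and l = g1'rY. The equation for cov(Y,X)
  becomes k0 (b - beta_med) = - l kappa (1 - |c|^2), which fixes l as a function of b, and the
  variance inequality for Y becomes l^2 (1 - |c|^2) < var(Y perp X,W1) + k0 (b - beta_med)^2; since
  z_X^2 = kappa^2 (1 - |c|^2), this is (b - beta_med)^2 < devsq(z_X). Finally, some rY satisfies
  g1'rY = l unless g1 = 0 while l is nonzero. Along the solutions g1 is affine in b and equals
  cov(W1,Y) - beta_med cov(W1,X), which is nonzero, at b = beta_med; so it vanishes for at most one b.\<close>

lemma matrix_inv_mat_1: "matrix_inv (mat 1 :: 'a::semiring_1^'n::finite^'n) = mat 1"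
proof -
  have "\<exists>A'::'a^'n^'n. mat 1 ** A' = mat 1 \<and> A' ** mat 1 = mat 1"
    by (intro exI[of _ "mat 1"]) simp
  from someI_ex[OF this] show ?thesis
    unfolding matrix_inv_def by simp
qed

lemma outer_mult_vec: "outer u v *v p = (v \<bullet> p) *\<^sub>R u"
  by (simp add: outer_def matrix_vector_mult_def vec_eq_iff inner_vec_def sum_distrib_left mult_ac)

lemma vec_mult_outer: "p v* outer u v = (p \<bullet> u) *\<^sub>R v"
  by (simp add: outer_def vector_matrix_mult_def vec_eq_iff inner_vec_def sum_distrib_left mult_ac)

lemma scaleR_matrix_vector_assoc: "(k *\<^sub>R A) *v p = k *\<^sub>R (A *v (p::real^'n::finite))"
  by (simp add: matrix_vector_mult_def vec_eq_iff sum_distrib_left mult_ac)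

lemma ex_inner_eq_iff:
  fixes g :: "'a::real_inner"
  shows "(\<exists>r. g \<bullet> r = l) \<longleftrightarrow> l = 0 \<or> g \<noteq> 0"
proof
  assume "l = 0 \<or> g \<noteq> 0"
  then show "\<exists>r. g \<bullet> r = l"
  proof
    assume "g \<noteq> 0"
    then have "g \<bullet> ((l / (g \<bullet> g)) *\<^sub>R g) = l" by simp
    then show ?thesis ..
  qed (intro exI[of _ 0], simp)
qed auto

lemma eq_add_inner_scaleR_iff:
  fixes s p r c :: "'a::real_inner"
  assumes "1 + r \<bullet> c \<noteq> 0"
  defines "k \<equiv> (r \<bullet> s) / (1 + r \<bullet> c)"
  shows "s = p + (p \<bullet> r) *\<^sub>R c \<longleftrightarrow> p \<bullet> r = k \<and> p = s - k *\<^sub>R c"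
proof -
  have k: "k * (1 + r \<bullet> c) = r \<bullet> s" unfolding k_def using assms(1) by simp
  show ?thesis
  proof
    assume s: "s = p + (p \<bullet> r) *\<^sub>R c"
    then have "(p \<bullet> r) * (1 + r \<bullet> c) = r \<bullet> s"
      by (simp add: inner_add_right inner_commute algebra_simps)
    then have "p \<bullet> r = k" using k assms(1) by (metis mult_right_cancel)
    with s show "p \<bullet> r = k \<and> p = s - k *\<^sub>R c" by simp
  next
    assume "p \<bullet> r = k \<and> p = s - k *\<^sub>R c"
    then show "s = p + (p \<bullet> r) *\<^sub>R c" by (metis diff_add_cancel)
  qed
qed

lemma mem_sqrt_interval_iff: "b \<in> {m - sqrt D <..< m + sqrt D} \<longleftrightarrow> (b - m)\<^sup>2 < (D::real)"
proof -
  have "(b - m)\<^sup>2 < D \<longleftrightarrow> \<bar>b - m\<bar> < sqrt D"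
    by (metis real_sqrt_abs real_sqrt_less_iff)
  then show ?thesis by (auto simp: abs_less_iff)
qed

lemma sq_less_devsq_iff:
  fixes k Z q \<kappa> V \<delta> l :: real
  assumes "0 < Z" "Z < k" "Z = \<kappa>\<^sup>2 * q" "\<delta> * k = - l * \<kappa> * q"
  shows "l\<^sup>2 * q < V + k * \<delta>\<^sup>2 \<longleftrightarrow> \<delta>\<^sup>2 < V / k * (Z / (k - Z))"
proof -
  have "l\<^sup>2 * q * Z = (l * \<kappa> * q)\<^sup>2" using assms(3) by (simp add: power2_eq_square)
  also have "\<dots> = (\<delta> * k)\<^sup>2" using assms(4) by simp
  finally have lZ: "l\<^sup>2 * q * Z = \<delta>\<^sup>2 * k\<^sup>2" by (simp only: power_mult_distrib)
  have "l\<^sup>2 * q < V + k * \<delta>\<^sup>2 \<longleftrightarrow> l\<^sup>2 * q * Z < (V + k * \<delta>\<^sup>2) * Z"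
    using assms(1) by simp
  also have "\<dots> \<longleftrightarrow> \<delta>\<^sup>2 * (k * (k - Z)) < V * Z"
    unfolding lZ by (simp add: algebra_simps power2_eq_square)
  also have "\<dots> \<longleftrightarrow> \<delta>\<^sup>2 < V / k * (Z / (k - Z))"
    using assms(1,2) by (simp add: pos_less_divide_eq)
  finally show ?thesis .
qed

lemma BSet_unit_variance_iff:
  fixes m :: "'n::finite moments"
  assumes "varW m = mat 1"
  shows "b \<in> BSet m rX rY c \<longleftrightarrow> (\<exists>p g.
     covYX m = b * varX m + (g \<bullet> p + (g \<bullet> c) * (rX \<bullet> p) + (g \<bullet> rY) * (c \<bullet> p) + (g \<bullet> rY) * (rX \<bullet> p)) \<and>
     covWY m = b *\<^sub>R covWX m + g + (g \<bullet> rY) *\<^sub>R c \<and>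
     covWX m = p + (p \<bullet> rX) *\<^sub>R c \<and>
     b\<^sup>2 * varX m + (g \<bullet> g + (g \<bullet> rY)\<^sup>2 + 2 * (g \<bullet> rY) * (c \<bullet> g))
       + 2 * b * (g \<bullet> p + (g \<bullet> c) * (rX \<bullet> p) + (g \<bullet> rY) * (c \<bullet> p) + (g \<bullet> rY) * (rX \<bullet> p)) < varY m \<and>
     p \<bullet> p + 2 * (rX \<bullet> p) * (c \<bullet> p) + (rX \<bullet> p)\<^sup>2 < varX m \<and>
     c \<bullet> c < 1)"
  unfolding BSet_def Let_def assms
  by (simp add: matrix_inv_mat_1 outer_mult_vec vec_mult_outer scaleR_matrix_vector_assoc
      matrix_vector_mult_add_rdistrib vector_matrix_mult_add_rdistrib
      inner_add_right inner_scaleR_right inner_commute power2_eq_square algebra_simps)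

lemma BSet_cross_term_eq:
  fixes s t c r p g :: "'a::real_inner"
  assumes "p = s - \<kappa> *\<^sub>R c" "r \<bullet> p = \<kappa>" "g = t - b *\<^sub>R s - l *\<^sub>R c"
  shows "g \<bullet> p + (g \<bullet> c) * (r \<bullet> p) + l * (c \<bullet> p) + l * (r \<bullet> p)
    = t \<bullet> s - b * (s \<bullet> s) + l * \<kappa> * (1 - c \<bullet> c)"
  unfolding assms(2) unfolding assms(1,3)
  by (simp add: inner_diff_left inner_diff_right inner_commute algebra_simps)

lemma BSet_Y_quadratic_eq:
  fixes s t c g :: "'a::real_inner"
  assumes "g = t - b *\<^sub>R s - l *\<^sub>R c"
  shows "g \<bullet> g + l\<^sup>2 + 2 * l * (c \<bullet> g)
    = t \<bullet> t - 2 * b * (t \<bullet> s) + b\<^sup>2 * (s \<bullet> s) + l\<^sup>2 * (1 - c \<bullet> c)"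
  unfolding assms
  by (simp add: inner_diff_left inner_diff_right inner_commute algebra_simps power2_eq_square)

lemma BSet_X_quadratic_eq:
  fixes s c p :: "'a::real_inner"
  assumes "p = s - \<kappa> *\<^sub>R c"
  shows "p \<bullet> p + 2 * \<kappa> * (c \<bullet> p) + \<kappa>\<^sup>2 = s \<bullet> s + \<kappa>\<^sup>2 * (1 - c \<bullet> c)"
  unfolding assms
  by (simp add: inner_diff_left inner_diff_right inner_commute algebra_simps power2_eq_square)

lemma k0_unit_variance: "varW m = mat 1 \<Longrightarrow> k0 m = varX m - covWX m \<bullet> covWX m"
  by (simp add: k0_def matrix_inv_mat_1)

lemma k1_unit_variance: "varW m = mat 1 \<Longrightarrow> k1 m = covYX m - covWY m \<bullet> covWX m"
  by (simp add: k1_def matrix_inv_mat_1)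

lemma k0_pos:
  assumes "var_pos_def m" "varW m = mat 1"
  shows "k0 m > 0"
proof -
  have "\<forall>a b w. (a, b, w) \<noteq> (0, 0, 0) \<longrightarrow> 0 < a\<^sup>2 * varY m + b\<^sup>2 * varX m + w \<bullet> w
      + 2 * a * b * covYX m + 2 * a * (w \<bullet> covWY m) + 2 * b * (w \<bullet> covWX m)"
    using assms unfolding var_pos_def_def by simp
  from this[rule_format, of 0 1 "- covWX m"] show ?thesis
    by (simp add: k0_unit_variance[OF assms(2)])
qed

lemma proj_coefs_unit_variance:
  fixes m :: "'n::finite moments"
  assumes W: "varW m = mat 1" and "k0 m \<noteq> 0"
  shows "proj_coefs m = (k1 m / k0 m, covWY m - (k1 m / k0 m) *\<^sub>R covWX m)"
  unfolding proj_coefs_def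
proof (rule the_equality)
  define \<beta> where "\<beta> = k1 m / k0 m"
  have "\<beta> * (varX m - covWX m \<bullet> covWX m) = covYX m - covWY m \<bullet> covWX m"
    using assms by (simp add: \<beta>_def k0_unit_variance k1_unit_variance)
  then show "case (\<beta>, covWY m - \<beta> *\<^sub>R covWX m) of (b, g) \<Rightarrow>
      covYX m = b * varX m + g \<bullet> covWX m \<and> covWY m = b *\<^sub>R covWX m + varW m *v g"
    by (simp add: W inner_diff_left inner_commute algebra_simps)
next
  fix bg :: "real \<times> (real^'n)"
  obtain b g where bg: "bg = (b, g)" by (cases bg)
  assume "case bg of (b, g) \<Rightarrow>
      covYX m = b * varX m + g \<bullet> covWX m \<and> covWY m = b *\<^sub>R covWX m + varW m *v g"
  then have a: "covYX m = b * varX m + g \<bullet> covWX m" and g: "g = covWY m - b *\<^sub>R covWX m"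
    unfolding bg W by auto
  from a have "b * k0 m = k1 m"
    unfolding g by (simp add: W k0_unit_variance k1_unit_variance inner_diff_left inner_commute algebra_simps)
  then have "b = k1 m / k0 m" using assms(2) by (simp add: field_simps)
  with bg g show "bg = (k1 m / k0 m, covWY m - (k1 m / k0 m) *\<^sub>R covWX m)" by simp
qed

lemma beta_med_unit_variance:
  "varW m = mat 1 \<Longrightarrow> k0 m \<noteq> 0 \<Longrightarrow> beta_med m = k1 m / k0 m"
  by (simp add: beta_med_def proj_coefs_unit_variance)

lemma var_Y_perp_XW_unit_variance:
  assumes "varW m = mat 1" "k0 m \<noteq> 0"
  shows "var_Y_perp_XW m = varY m - covWY m \<bullet> covWY m - beta_med m * k1 m"
proof -
  have "proj_coefs m = (beta_med m, covWY m - beta_med m *\<^sub>R covWX m)"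
    using assms by (simp add: proj_coefs_unit_variance beta_med_unit_variance)
  then show ?thesis
    by (simp add: var_Y_perp_XW_def k1_unit_variance[OF assms(1)] inner_diff_left inner_commute
        algebra_simps)
qed

text \<open>The value of rX'p1 forced by the equation cov(X,W1) = p1'(I + rX c').\<close>

definition kappa :: "'n::finite moments \<Rightarrow> real^'n \<Rightarrow> real^'n \<Rightarrow> real" where
  "kappa m rX c = (rX \<bullet> covWX m) / (1 + rX \<bullet> c)"

lemma z_X_eq_kappa: "z_X m rX c = kappa m rX c * sqrt (1 - c \<bullet> c)"
  by (simp add: z_X_def kappa_def power2_norm_eq_inner)

lemma BSet_conditions_reduced_iff:
  fixes m :: "'n::finite moments"
  assumes W: "varW m = mat 1"
    and p: "p = covWX m - \<kappa> *\<^sub>R c" and rp: "rX \<bullet> p = \<kappa>"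
    and g: "g = covWY m - b *\<^sub>R covWX m - l *\<^sub>R c" and l: "g \<bullet> rY = l"
  shows "(covYX m = b * varX m + (g \<bullet> p + (g \<bullet> c) * (rX \<bullet> p) + (g \<bullet> rY) * (c \<bullet> p) + (g \<bullet> rY) * (rX \<bullet> p)) \<and>
     b\<^sup>2 * varX m + (g \<bullet> g + (g \<bullet> rY)\<^sup>2 + 2 * (g \<bullet> rY) * (c \<bullet> g))
       + 2 * b * (g \<bullet> p + (g \<bullet> c) * (rX \<bullet> p) + (g \<bullet> rY) * (c \<bullet> p) + (g \<bullet> rY) * (rX \<bullet> p)) < varY m \<and>
     p \<bullet> p + 2 * (rX \<bullet> p) * (c \<bullet> p) + (rX \<bullet> p)\<^sup>2 < varX m)
   \<longleftrightarrow> (k1 m - b * k0 m = l * \<kappa> * (1 - c \<bullet> c) \<and>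
     l\<^sup>2 * (1 - c \<bullet> c) < varY m - covWY m \<bullet> covWY m - 2 * b * k1 m + b\<^sup>2 * k0 m \<and>
     \<kappa>\<^sup>2 * (1 - c \<bullet> c) < k0 m)"
proof -
  define s t where "s = covWX m" and "t = covWY m"
  have k0: "k0 m = varX m - s \<bullet> s" and k1: "k1 m = covYX m - t \<bullet> s"
    unfolding s_def t_def using W by (simp_all add: k0_unit_variance k1_unit_variance)
  note cross = BSet_cross_term_eq[OF p rp g] and quadY = BSet_Y_quadratic_eq[OF g]
    and quadX = BSet_X_quadratic_eq[OF p]
  have E_iff: "covYX m = b * varX m + (g \<bullet> p + (g \<bullet> c) * (rX \<bullet> p) + l * (c \<bullet> p) + l * (rX \<bullet> p))
      \<longleftrightarrow> k1 m - b * k0 m = l * \<kappa> * (1 - c \<bullet> c)"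
    unfolding cross s_def[symmetric] t_def[symmetric] k0 k1 by (auto simp: algebra_simps)
  have I_iff: "b\<^sup>2 * varX m + (g \<bullet> g + l\<^sup>2 + 2 * l * (c \<bullet> g))
       + 2 * b * (g \<bullet> p + (g \<bullet> c) * (rX \<bullet> p) + l * (c \<bullet> p) + l * (rX \<bullet> p)) < varY m
      \<longleftrightarrow> l\<^sup>2 * (1 - c \<bullet> c) < varY m - t \<bullet> t - 2 * b * k1 m + b\<^sup>2 * k0 m"
    if "covYX m = b * varX m + (g \<bullet> p + (g \<bullet> c) * (rX \<bullet> p) + l * (c \<bullet> p) + l * (rX \<bullet> p))"
  proof -
    have C: "g \<bullet> p + (g \<bullet> c) * (rX \<bullet> p) + l * (c \<bullet> p) + l * (rX \<bullet> p) = covYX m - b * varX m"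
      using that by simp
    show ?thesis
      unfolding C quadY t_def[symmetric] s_def[symmetric] k0 k1 by (auto simp: algebra_simps power2_eq_square)
  qed
  have X_iff: "p \<bullet> p + 2 * (rX \<bullet> p) * (c \<bullet> p) + (rX \<bullet> p)\<^sup>2 < varX m \<longleftrightarrow> \<kappa>\<^sup>2 * (1 - c \<bullet> c) < k0 m"
    unfolding rp quadX k0 s_def by auto
  show ?thesis
    unfolding l t_def[symmetric] using E_iff I_iff X_iff by blast
qed

text \<open>Here l stands for g1'rY; p1 and g1 are eliminated.\<close>

lemma BSet_unit_variance_reduced_iff:
  fixes m :: "'n::finite moments"
  assumes W: "varW m = mat 1" and den: "1 + rX \<bullet> c \<noteq> 0"
  shows "b \<in> BSet m rX rY c \<longleftrightarrow> c \<bullet> c < 1 \<and> (kappa m rX c)\<^sup>2 * (1 - c \<bullet> c) < k0 m \<and>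
    (\<exists>l. (covWY m - b *\<^sub>R covWX m - l *\<^sub>R c) \<bullet> rY = l \<and>
         k1 m - b * k0 m = l * kappa m rX c * (1 - c \<bullet> c) \<and>
         l\<^sup>2 * (1 - c \<bullet> c) < varY m - covWY m \<bullet> covWY m - 2 * b * k1 m + b\<^sup>2 * k0 m)"
    (is "_ \<longleftrightarrow> ?reduced")
proof -
  define \<kappa> where "\<kappa> = kappa m rX c"
  have p_iff: "covWX m = p + (p \<bullet> rX) *\<^sub>R c \<longleftrightarrow> rX \<bullet> p = \<kappa> \<and> p = covWX m - \<kappa> *\<^sub>R c" for p
    using eq_add_inner_scaleR_iff[OF den] unfolding \<kappa>_def kappa_def by (simp add: inner_commute)
  show ?thesis
  proof
    assume "b \<in> BSet m rX rY c"
    then obtain p g where t: "covWY m = b *\<^sub>R covWX m + g + (g \<bullet> rY) *\<^sub>R c"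
      and s: "covWX m = p + (p \<bullet> rX) *\<^sub>R c" and cc: "c \<bullet> c < 1"
      and conds: "covYX m = b * varX m + (g \<bullet> p + (g \<bullet> c) * (rX \<bullet> p) + (g \<bullet> rY) * (c \<bullet> p) + (g \<bullet> rY) * (rX \<bullet> p)) \<and>
       b\<^sup>2 * varX m + (g \<bullet> g + (g \<bullet> rY)\<^sup>2 + 2 * (g \<bullet> rY) * (c \<bullet> g))
       + 2 * b * (g \<bullet> p + (g \<bullet> c) * (rX \<bullet> p) + (g \<bullet> rY) * (c \<bullet> p) + (g \<bullet> rY) * (rX \<bullet> p)) < varY m \<and>
       p \<bullet> p + 2 * (rX \<bullet> p) * (c \<bullet> p) + (rX \<bullet> p)\<^sup>2 < varX m"
      unfolding BSet_unit_variance_iff[OF W] by blast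
    have rp: "rX \<bullet> p = \<kappa>" and p: "p = covWX m - \<kappa> *\<^sub>R c" using s p_iff by blast+
    have g: "g = covWY m - b *\<^sub>R covWX m - (g \<bullet> rY) *\<^sub>R c" using t by (simp add: algebra_simps)
    then have "(covWY m - b *\<^sub>R covWX m - (g \<bullet> rY) *\<^sub>R c) \<bullet> rY = g \<bullet> rY" by simp
    with BSet_conditions_reduced_iff[OF W p rp g refl] conds cc show ?reduced
      unfolding \<kappa>_def by blast
  next
    assume ?reduced
    then obtain l where cc: "c \<bullet> c < 1"
      and gl: "(covWY m - b *\<^sub>R covWX m - l *\<^sub>R c) \<bullet> rY = l"
      and reduced: "k1 m - b * k0 m = l * \<kappa> * (1 - c \<bullet> c) \<and>
         l\<^sup>2 * (1 - c \<bullet> c) < varY m - covWY m \<bullet> covWY m - 2 * b * k1 m + b\<^sup>2 * k0 m \<and>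
         \<kappa>\<^sup>2 * (1 - c \<bullet> c) < k0 m"
      unfolding \<kappa>_def by blast
    define p g where "p = covWX m - \<kappa> *\<^sub>R c" and "g = covWY m - b *\<^sub>R covWX m - l *\<^sub>R c"
    have rp: "rX \<bullet> p = \<kappa>"
      using den unfolding p_def \<kappa>_def kappa_def by (simp add: inner_diff_right field_simps)
    have l: "g \<bullet> rY = l" using gl unfolding g_def .
    have "covWY m = b *\<^sub>R covWX m + g + (g \<bullet> rY) *\<^sub>R c" unfolding l by (simp add: g_def)
    moreover have "covWX m = p + (p \<bullet> rX) *\<^sub>R c" using p_iff rp p_def by blast
    ultimately show "b \<in> BSet m rX rY c"
      unfolding BSet_unit_variance_iff[OF W]
      using BSet_conditions_reduced_iff[OF W p_def rp g_def l] reduced cc by blast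
  qed
qed

lemma mem_Union_BSet_unit_variance_iff:
  fixes m :: "'n::finite moments"
  assumes "varW m = mat 1" and "1 + rX \<bullet> c \<noteq> 0"
  shows "b \<in> (\<Union>rY. BSet m rX rY c) \<longleftrightarrow> c \<bullet> c < 1 \<and> (kappa m rX c)\<^sup>2 * (1 - c \<bullet> c) < k0 m \<and>
    (\<exists>l. (l \<noteq> 0 \<longrightarrow> covWY m - b *\<^sub>R covWX m - l *\<^sub>R c \<noteq> 0) \<and>
         k1 m - b * k0 m = l * kappa m rX c * (1 - c \<bullet> c) \<and>
         l\<^sup>2 * (1 - c \<bullet> c) < varY m - covWY m \<bullet> covWY m - 2 * b * k1 m + b\<^sup>2 * k0 m)"
  unfolding UN_iff BSet_unit_variance_reduced_iff[OF assms]
  using ex_inner_eq_iff[of "covWY m - b *\<^sub>R covWX m - _ *\<^sub>R c"] by blast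

text \<open>The b at which l = g1'rY is forced to be nonzero while g1 = cov(W1,Y) - b cov(W1,X) - l c
  vanishes, so that no rY exists.\<close>

definition exceptional_betas :: "'n::finite moments \<Rightarrow> real^'n \<Rightarrow> real^'n \<Rightarrow> real set" where
  "exceptional_betas m rX c = {b. b \<noteq> beta_med m \<and>
     covWY m - b *\<^sub>R covWX m - ((beta_med m - b) * k0 m / (kappa m rX c * (1 - c \<bullet> c))) *\<^sub>R c = 0}"

lemma exceptional_betas_subsingleton:
  fixes m :: "'n::finite moments"
  assumes "varX m = 1" "varW m = mat 1" "k0 m \<noteq> 0" "covWY m \<noteq> covYX m *\<^sub>R covWX m"
  shows "\<exists>x. exceptional_betas m rX c \<subseteq> {x}"
proof -
  define \<beta> \<theta> where "\<beta> = beta_med m" and "\<theta> = k0 m / (kappa m rX c * (1 - c \<bullet> c))"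
  define v w where "v = covWY m - \<beta> *\<^sub>R covWX m" and "w = covWX m - \<theta> *\<^sub>R c"
  have "v \<noteq> 0"
  proof
    assume "v = 0"
    then have t: "covWY m = \<beta> *\<^sub>R covWX m" unfolding v_def by simp
    have "\<beta> * k0 m = k1 m" using assms(2,3) by (simp add: \<beta>_def beta_med_unit_variance)
    then have "\<beta> = covYX m"
      using assms(1,2) by (simp add: t k0_unit_variance k1_unit_variance algebra_simps)
    with t assms(4) show False by simp
  qed
  have exc: "v = (b - \<beta>) *\<^sub>R w" if "b \<in> exceptional_betas m rX c" for b
  proof -
    have "covWY m - b *\<^sub>R covWX m - ((\<beta> - b) * \<theta>) *\<^sub>R c = 0"
      using that unfolding exceptional_betas_def \<beta>_def[symmetric] by (simp add: \<theta>_def)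
    then show ?thesis unfolding v_def w_def by (simp add: algebra_simps)
  qed
  have "b1 = b2" if "b1 \<in> exceptional_betas m rX c" "b2 \<in> exceptional_betas m rX c" for b1 b2
  proof -
    have "(b1 - \<beta>) *\<^sub>R w = (b2 - \<beta>) *\<^sub>R w" and "w \<noteq> 0"
      using exc[OF that(1)] exc[OF that(2)] \<open>v \<noteq> 0\<close> by auto
    then show ?thesis by simp
  qed
  then show ?thesis by blast
qed

lemma mem_Union_BSet_iff:
  fixes m :: "'n::finite moments"
  assumes W: "varW m = mat 1" and pd: "var_pos_def m" and c: "norm c < 1" and den: "1 + rX \<bullet> c \<noteq> 0"
    and Z: "0 < (z_X m rX c)\<^sup>2" "(z_X m rX c)\<^sup>2 < k0 m"
  shows "b \<in> (\<Union>rY. BSet m rX rY c) \<longleftrightarrow>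
    (b - beta_med m)\<^sup>2 < devsq m (z_X m rX c) \<and> b \<notin> exceptional_betas m rX c"
proof -
  define \<beta> \<kappa> q where "\<beta> = beta_med m" and "\<kappa> = kappa m rX c" and "q = 1 - c \<bullet> c"
  define l0 where "l0 = (\<beta> - b) * k0 m / (\<kappa> * q)"
  have k0: "k0 m > 0" by (rule k0_pos[OF pd W])
  have \<beta>: "\<beta> * k0 m = k1 m" using beta_med_unit_variance[OF W] k0 unfolding \<beta>_def by simp
  have cc: "c \<bullet> c < 1" using c by (metis power2_norm_eq_inner abs_norm_cancel abs_square_less_1)
  have Zeq: "(z_X m rX c)\<^sup>2 = \<kappa>\<^sup>2 * q"
    using cc by (simp add: z_X_eq_kappa power_mult_distrib \<kappa>_def q_def)
  with Z(1) have \<kappa>q: "\<kappa> * q \<noteq> 0" by auto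
  have E_iff: "k1 m - b * k0 m = l * \<kappa> * q \<longleftrightarrow> l = l0" for l
    using \<kappa>q unfolding l0_def \<beta>[symmetric] by (auto simp: field_simps)
  have E0: "(b - \<beta>) * k0 m = - l0 * \<kappa> * q" using \<kappa>q by (simp add: l0_def field_simps)
  have "varY m - covWY m \<bullet> covWY m - 2 * b * k1 m + b\<^sup>2 * k0 m = var_Y_perp_XW m + k0 m * (b - \<beta>)\<^sup>2"
    using var_Y_perp_XW_unit_variance[OF W] k0 unfolding \<beta>_def[symmetric] \<beta>[symmetric]
    by (simp add: algebra_simps power2_eq_square)
  then have I_iff: "l0\<^sup>2 * q < varY m - covWY m \<bullet> covWY m - 2 * b * k1 m + b\<^sup>2 * k0 m \<longleftrightarrow>
      (b - \<beta>)\<^sup>2 < devsq m (z_X m rX c)"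
    using sq_less_devsq_iff[OF Z Zeq E0] unfolding devsq_def by simp
  have exc_iff: "(l0 \<noteq> 0 \<longrightarrow> covWY m - b *\<^sub>R covWX m - l0 *\<^sub>R c \<noteq> 0) \<longleftrightarrow> b \<notin> exceptional_betas m rX c"
    using k0 \<kappa>q unfolding exceptional_betas_def l0_def \<beta>_def \<kappa>_def q_def by auto
  show ?thesis
    unfolding mem_Union_BSet_unit_variance_iff[OF W den] \<kappa>_def[symmetric] q_def[symmetric] E_iff
    using cc Z(2) Zeq I_iff exc_iff unfolding \<beta>_def by auto
qed

theorem mainTheorem19:
  fixes m :: "'n::finite moments" and rX c :: "real^'n"
  assumes "varX m = 1" and "varW m = mat 1"
    and "var_pos_def m"
    and "covWY m \<noteq> covYX m *\<^sub>R covWX m"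
    and "norm c < 1"
    and "rX \<bullet> c \<noteq> -1"
    and "0 < (z_X m rX c)\<^sup>2" and "(z_X m rX c)\<^sup>2 < k0 m"
  shows "\<exists>B0. (\<exists>x. B0 \<subseteq> {x}) \<and>
     (\<Union>rY. BSet m rX rY c) =
       {beta_med m - sqrt (devsq m (z_X m rX c)) <..< beta_med m + sqrt (devsq m (z_X m rX c))} - B0"
proof (rule exI, rule conjI)
  have "1 + rX \<bullet> c \<noteq> 0" using assms(6) by (metis add.commute add_eq_0_iff)
  note mem = mem_Union_BSet_iff[OF assms(2,3,5) this assms(7,8)]
  show "\<exists>x. exceptional_betas m rX c \<subseteq> {x}"
    using exceptional_betas_subsingleton[OF assms(1,2) _ assms(4)] k0_pos[OF assms(3,2)] by simp
  show "(\<Union>rY. BSet m rX rY c) =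
       {beta_med m - sqrt (devsq m (z_X m rX c)) <..< beta_med m + sqrt (devsq m (z_X m rX c))}
       - exceptional_betas m rX c"
    using mem mem_sqrt_interval_iff by blast
qed

end
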